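(* The category $\mathbf{Frm}$ of frames and frame morphisms is equivalent to the category $\mathbf{Cons}$ of constructible algebras and constructible morphisms.
   Context: An interior algebra is a pair $(A,\square)$ with $A$ a boolean algebra and $\square:A\to A$ satisfying $\square 1=1$, $\square(a\wedge b)=\square a\wedge\square b$, $\square a\le a$, $\square a\le\square\square a$; $\mathcal O A=\{a:\square a=a\}$ is the set of open elements. $A$ is essential if the boolean subalgebra of $A$ generated by $\mathcal O A$ is all of $A$. A constructible algebra is an essential interior algebra $A$ such that the poset $\mathcal O A$ is a frame. A constructible morphism $f:A\to B$ between constructible algebras is a boolean homomorphism with $f(\square a)\le\square f(a)$ for all $a\in A$ (so $f$ maps opens to opens) such that $f|_{\mathcal O A}:\mathcal O A\to\mathcal O B$ is a frame morphism (preserves arbitrary joins and finite meets). *)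

theory Defs
  imports Main
begin

definition is_lub :: "'a set \<Rightarrow> ('a \<Rightarrow> 'a \<Rightarrow> bool) \<Rightarrow> 'a set \<Rightarrow> 'a \<Rightarrow> bool" where
  "is_lub L le S x \<longleftrightarrow> x \<in> L \<and> (\<forall>s\<in>S. le s x) \<and> (\<forall>y\<in>L. (\<forall>s\<in>S. le s y) \<longrightarrow> le x y)"

definition is_glb :: "'a set \<Rightarrow> ('a \<Rightarrow> 'a \<Rightarrow> bool) \<Rightarrow> 'a set \<Rightarrow> 'a \<Rightarrow> bool" where
  "is_glb L le S x \<longleftrightarrow> x \<in> L \<and> (\<forall>s\<in>S. le x s) \<and> (\<forall>y\<in>L. (\<forall>s\<in>S. le y s) \<longrightarrow> le y x)"

definition partial_order_on' :: "'a set \<Rightarrow> ('a \<Rightarrow> 'a \<Rightarrow> bool) \<Rightarrow> bool" where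
  "partial_order_on' L le \<longleftrightarrow>
     (\<forall>x\<in>L. le x x) \<and>
     (\<forall>x\<in>L. \<forall>y\<in>L. le x y \<and> le y x \<longrightarrow> x = y) \<and>
     (\<forall>x\<in>L. \<forall>y\<in>L. \<forall>z\<in>L. le x y \<and> le y z \<longrightarrow> le x z)"

definition is_frame :: "'a set \<Rightarrow> ('a \<Rightarrow> 'a \<Rightarrow> bool) \<Rightarrow> bool" where
  "is_frame L le \<longleftrightarrow>
     partial_order_on' L le \<and>
     (\<forall>S\<subseteq>L. \<exists>x. is_lub L le S x) \<and>
     (\<forall>S\<subseteq>L. finite S \<longrightarrow> (\<exists>x. is_glb L le S x)) \<and>
     (\<forall>a\<in>L. \<forall>S\<subseteq>L. \<forall>x y. is_lub L le S x \<longrightarrow> is_glb L le {a, x} y \<longrightarrow>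
        is_lub L le {z. \<exists>s\<in>S. is_glb L le {a, s} z} y)"

definition frame_hom ::
  "'a set \<Rightarrow> ('a \<Rightarrow> 'a \<Rightarrow> bool) \<Rightarrow> 'b set \<Rightarrow> ('b \<Rightarrow> 'b \<Rightarrow> bool) \<Rightarrow> ('a \<Rightarrow> 'b) \<Rightarrow> bool" where
  "frame_hom L le M le' f \<longleftrightarrow>
     f ` L \<subseteq> M \<and>
     (\<forall>S\<subseteq>L. \<forall>x. is_lub L le S x \<longrightarrow> is_lub M le' (f ` S) (f x)) \<and>
     (\<forall>S\<subseteq>L. finite S \<longrightarrow> (\<forall>x. is_glb L le S x \<longrightarrow> is_glb M le' (f ` S) (f x)))"

definition frame_iso ::
  "'a set \<Rightarrow> ('a \<Rightarrow> 'a \<Rightarrow> bool) \<Rightarrow> 'b set \<Rightarrow> ('b \<Rightarrow> 'b \<Rightarrow> bool) \<Rightarrow> bool" where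
  "frame_iso L le M le' \<longleftrightarrow>
     (\<exists>f g. frame_hom L le M le' f \<and> frame_hom M le' L le g \<and>
            (\<forall>x\<in>L. g (f x) = x) \<and> (\<forall>y\<in>M. f (g y) = y))"

record 'a ialg =
  ia_carrier :: "'a set"
  ia_meet :: "'a \<Rightarrow> 'a \<Rightarrow> 'a"
  ia_join :: "'a \<Rightarrow> 'a \<Rightarrow> 'a"
  ia_compl :: "'a \<Rightarrow> 'a"
  ia_bot :: 'a
  ia_top :: 'a
  ia_box :: "'a \<Rightarrow> 'a"

definition ia_le :: "('a, 'm) ialg_scheme \<Rightarrow> 'a \<Rightarrow> 'a \<Rightarrow> bool" where
  "ia_le A x y \<longleftrightarrow> ia_meet A x y = x"

definition boolean_alg :: "('a, 'm) ialg_scheme \<Rightarrow> bool" where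
  "boolean_alg A \<longleftrightarrow> (let C = ia_carrier A; m = ia_meet A; j = ia_join A; c = ia_compl A in
     ia_bot A \<in> C \<and> ia_top A \<in> C \<and>
     (\<forall>x\<in>C. \<forall>y\<in>C. m x y \<in> C \<and> j x y \<in> C) \<and> (\<forall>x\<in>C. c x \<in> C) \<and>
     (\<forall>x\<in>C. \<forall>y\<in>C. \<forall>z\<in>C. m (m x y) z = m x (m y z) \<and> j (j x y) z = j x (j y z)) \<and>
     (\<forall>x\<in>C. \<forall>y\<in>C. m x y = m y x \<and> j x y = j y x) \<and>
     (\<forall>x\<in>C. \<forall>y\<in>C. m x (j x y) = x \<and> j x (m x y) = x) \<and>
     (\<forall>x\<in>C. \<forall>y\<in>C. \<forall>z\<in>C. m x (j y z) = j (m x y) (m x z)) \<and>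
     (\<forall>x\<in>C. j x (ia_bot A) = x \<and> m x (ia_top A) = x) \<and>
     (\<forall>x\<in>C. m x (c x) = ia_bot A \<and> j x (c x) = ia_top A))"

definition interior_alg :: "('a, 'm) ialg_scheme \<Rightarrow> bool" where
  "interior_alg A \<longleftrightarrow> boolean_alg A \<and>
     (\<forall>a\<in>ia_carrier A. ia_box A a \<in> ia_carrier A) \<and>
     ia_box A (ia_top A) = ia_top A \<and>
     (\<forall>a\<in>ia_carrier A. \<forall>b\<in>ia_carrier A. ia_box A (ia_meet A a b) = ia_meet A (ia_box A a) (ia_box A b)) \<and>
     (\<forall>a\<in>ia_carrier A. ia_le A (ia_box A a) a) \<and>
     (\<forall>a\<in>ia_carrier A. ia_le A (ia_box A a) (ia_box A (ia_box A a)))"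

definition opens :: "('a, 'm) ialg_scheme \<Rightarrow> 'a set" where
  "opens A = {a \<in> ia_carrier A. ia_box A a = a}"

definition bool_closed :: "('a, 'm) ialg_scheme \<Rightarrow> 'a set \<Rightarrow> bool" where
  "bool_closed A S \<longleftrightarrow> ia_bot A \<in> S \<and> ia_top A \<in> S \<and>
     (\<forall>x\<in>S. \<forall>y\<in>S. ia_meet A x y \<in> S \<and> ia_join A x y \<in> S) \<and> (\<forall>x\<in>S. ia_compl A x \<in> S)"

definition generated_subalg :: "('a, 'm) ialg_scheme \<Rightarrow> 'a set \<Rightarrow> 'a set" where
  "generated_subalg A X = \<Inter>{S. X \<subseteq> S \<and> S \<subseteq> ia_carrier A \<and> bool_closed A S}"

definition essential :: "('a, 'm) ialg_scheme \<Rightarrow> bool" where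
  "essential A \<longleftrightarrow> generated_subalg A (opens A) = ia_carrier A"

definition constructible_alg :: "('a, 'm) ialg_scheme \<Rightarrow> bool" where
  "constructible_alg A \<longleftrightarrow> interior_alg A \<and> essential A \<and> is_frame (opens A) (ia_le A)"

definition bool_hom :: "('a, 'm) ialg_scheme \<Rightarrow> ('b, 'n) ialg_scheme \<Rightarrow> ('a \<Rightarrow> 'b) \<Rightarrow> bool" where
  "bool_hom A B f \<longleftrightarrow> f ` ia_carrier A \<subseteq> ia_carrier B \<and>
     (\<forall>x\<in>ia_carrier A. \<forall>y\<in>ia_carrier A.
        f (ia_meet A x y) = ia_meet B (f x) (f y) \<and> f (ia_join A x y) = ia_join B (f x) (f y)) \<and>
     (\<forall>x\<in>ia_carrier A. f (ia_compl A x) = ia_compl B (f x)) \<and>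
     f (ia_bot A) = ia_bot B \<and> f (ia_top A) = ia_top B"

definition constructible_hom :: "('a, 'm) ialg_scheme \<Rightarrow> ('b, 'n) ialg_scheme \<Rightarrow> ('a \<Rightarrow> 'b) \<Rightarrow> bool" where
  "constructible_hom A B f \<longleftrightarrow> bool_hom A B f \<and>
     (\<forall>a\<in>ia_carrier A. ia_le B (f (ia_box A a)) (ia_box B (f a))) \<and>
     frame_hom (opens A) (ia_le A) (opens B) (ia_le B) f"

end

theory Submission
  imports Defs
begin

text \<open>
  Since a constructible algebra \<open>A\<close> is generated by its frame of opens \<open>\<O>A\<close>, which is a bounded
  sublattice, every element of \<open>A\<close> is a finite meet of clauses \<open>\<not>u \<or> v\<close> with \<open>u, v\<close> open.
  Boolean homomorphisms agreeing on \<open>\<O>A\<close> therefore agree everywhere (faithfulness).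
  A frame map \<open>h : \<O>A \<rightarrow> \<O>B\<close> extends by sending \<open>\<And>\<^sub>i (\<not>u\<^sub>i \<or> v\<^sub>i)\<close> to
  \<open>\<And>\<^sub>i (\<not>h u\<^sub>i \<or> h v\<^sub>i)\<close>; this is well defined because an inequality
  \<open>p \<and> \<And>\<^sub>i (\<not>u\<^sub>i \<or> v\<^sub>i) \<le> q\<close> unfolds into finitely many inequalities between opens,
  which \<open>h\<close> preserves. The extension \<open>f\<close> satisfies \<open>f (\<box>a) \<le> \<box>(f a)\<close> automatically, as
  \<open>f (\<box>a)\<close> is an open below \<open>f a\<close> (fullness).
  Conversely a frame \<open>L\<close> embeds, by the prime filter theorem, into the powerset of its prime
  filters via \<open>u \<mapsto> {P. u \<in> P}\<close>. The boolean algebra of subsets generated by the image,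
  with \<open>\<box>a\<close> the image of the join of all \<open>w\<close> whose image lies in \<open>a\<close>, is constructible
  and has exactly the image of \<open>L\<close> as its opens; that this \<open>\<box>a\<close> lies below \<open>a\<close> is where
  infinite distributivity enters.
\<close>

definition bounded_sublattice :: "('a, 'm) ialg_scheme \<Rightarrow> 'a set \<Rightarrow> bool" where
  "bounded_sublattice A D \<longleftrightarrow> D \<subseteq> ia_carrier A \<and> ia_bot A \<in> D \<and> ia_top A \<in> D \<and>
     (\<forall>x\<in>D. \<forall>y\<in>D. ia_meet A x y \<in> D \<and> ia_join A x y \<in> D)"

lemma generated_subalg_eqI:
  assumes "X \<subseteq> N" "N \<subseteq> ia_carrier A" "bool_closed A N"
    and "\<And>S. X \<subseteq> S \<Longrightarrow> bool_closed A S \<Longrightarrow> N \<subseteq> S"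
  shows "generated_subalg A X = N"
  using assms unfolding generated_subalg_def by blast

lemma bool_homD:
  assumes "bool_hom A B f"
  shows "x \<in> ia_carrier A \<Longrightarrow> y \<in> ia_carrier A \<Longrightarrow> f (ia_meet A x y) = ia_meet B (f x) (f y)"
    and "x \<in> ia_carrier A \<Longrightarrow> y \<in> ia_carrier A \<Longrightarrow> f (ia_join A x y) = ia_join B (f x) (f y)"
    and "x \<in> ia_carrier A \<Longrightarrow> f (ia_compl A x) = ia_compl B (f x)"
    and "f (ia_bot A) = ia_bot B" and "f (ia_top A) = ia_top B"
  using assms unfolding bool_hom_def by simp_all

lemma is_lub_unique:
  "\<forall>x\<in>L. \<forall>y\<in>L. le x y \<and> le y x \<longrightarrow> x = y \<Longrightarrow> is_lub L le S x \<Longrightarrow> is_lub L le S y \<Longrightarrow> x = y"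
  unfolding is_lub_def by blast

lemma is_glb_unique:
  "\<forall>x\<in>L. \<forall>y\<in>L. le x y \<and> le y x \<longrightarrow> x = y \<Longrightarrow> is_glb L le S x \<Longrightarrow> is_glb L le S y \<Longrightarrow> x = y"
  unfolding is_glb_def by blast

lemma frame_hom_cong:
  assumes h: "frame_hom L le M le' h" and fh: "\<forall>x\<in>L. f x = h x"
  shows "frame_hom L le M le' f"
proof -
  have img: "f ` S = h ` S" if "S \<subseteq> L" for S
    using fh that by (intro image_cong) auto
  show ?thesis
    unfolding frame_hom_def
  proof (intro conjI allI impI)
    show "f ` L \<subseteq> M" using h img[of L] by (simp add: frame_hom_def)
    fix S x assume "S \<subseteq> L"
    show "is_lub M le' (f ` S) (f x)" if "is_lub L le S x"
      using h that \<open>S \<subseteq> L\<close> fh img[OF \<open>S \<subseteq> L\<close>] by (simp add: frame_hom_def is_lub_def)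
    show "is_glb M le' (f ` S) (f x)" if "finite S" "is_glb L le S x"
      using h that \<open>S \<subseteq> L\<close> fh img[OF \<open>S \<subseteq> L\<close>] by (simp add: frame_hom_def is_glb_def)
  qed
qed

locale bool_alg =
  fixes A :: "('a, 'm) ialg_scheme"
  assumes boolean: "boolean_alg A"
begin

abbreviation C where "C \<equiv> ia_carrier A"
abbreviation meet where "meet \<equiv> ia_meet A"
abbreviation join where "join \<equiv> ia_join A"
abbreviation neg where "neg \<equiv> ia_compl A"
abbreviation bot where "bot \<equiv> ia_bot A"
abbreviation top where "top \<equiv> ia_top A"
abbreviation le where "le \<equiv> ia_le A"

lemma bot_closed [simp]: "bot \<in> C"
  and top_closed [simp]: "top \<in> C"
  and meet_closed [simp]: "x \<in> C \<Longrightarrow> y \<in> C \<Longrightarrow> meet x y \<in> C"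
  and join_closed [simp]: "x \<in> C \<Longrightarrow> y \<in> C \<Longrightarrow> join x y \<in> C"
  and neg_closed [simp]: "x \<in> C \<Longrightarrow> neg x \<in> C"
  using boolean unfolding boolean_alg_def Let_def by auto

lemma meet_assoc: "x \<in> C \<Longrightarrow> y \<in> C \<Longrightarrow> z \<in> C \<Longrightarrow> meet (meet x y) z = meet x (meet y z)"
  and join_assoc: "x \<in> C \<Longrightarrow> y \<in> C \<Longrightarrow> z \<in> C \<Longrightarrow> join (join x y) z = join x (join y z)"
  and meet_comm: "x \<in> C \<Longrightarrow> y \<in> C \<Longrightarrow> meet x y = meet y x"
  and join_comm: "x \<in> C \<Longrightarrow> y \<in> C \<Longrightarrow> join x y = join y x"
  and meet_join_absorb: "x \<in> C \<Longrightarrow> y \<in> C \<Longrightarrow> meet x (join x y) = x"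
  and join_meet_absorb: "x \<in> C \<Longrightarrow> y \<in> C \<Longrightarrow> join x (meet x y) = x"
  and meet_join_distrib: "x \<in> C \<Longrightarrow> y \<in> C \<Longrightarrow> z \<in> C \<Longrightarrow> meet x (join y z) = join (meet x y) (meet x z)"
  and join_bot [simp]: "x \<in> C \<Longrightarrow> join x bot = x"
  and meet_top [simp]: "x \<in> C \<Longrightarrow> meet x top = x"
  and meet_neg [simp]: "x \<in> C \<Longrightarrow> meet x (neg x) = bot"
  and join_neg [simp]: "x \<in> C \<Longrightarrow> join x (neg x) = top"
  using boolean unfolding boolean_alg_def Let_def by auto

lemma meet_idem [simp]: "x \<in> C \<Longrightarrow> meet x x = x"
  by (metis meet_join_absorb join_meet_absorb meet_closed)

lemma join_idem [simp]: "x \<in> C \<Longrightarrow> join x x = x"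
  by (metis meet_join_absorb join_meet_absorb join_closed)

lemma meet_bot [simp]: "x \<in> C \<Longrightarrow> meet x bot = bot"
  by (metis meet_neg meet_assoc meet_idem neg_closed)

lemma join_top [simp]: "x \<in> C \<Longrightarrow> join x top = top"
  by (metis join_neg join_assoc join_idem neg_closed)

lemma bot_join [simp]: "x \<in> C \<Longrightarrow> join bot x = x"
  and top_meet [simp]: "x \<in> C \<Longrightarrow> meet top x = x"
  and bot_meet [simp]: "x \<in> C \<Longrightarrow> meet bot x = bot"
  and top_join [simp]: "x \<in> C \<Longrightarrow> join top x = top"
  by (simp_all add: join_comm[of _ x] meet_comm[of _ x])

lemma meet_left_commute: "x \<in> C \<Longrightarrow> y \<in> C \<Longrightarrow> z \<in> C \<Longrightarrow> meet x (meet y z) = meet y (meet x z)"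
  by (metis meet_assoc meet_comm)

lemma join_left_commute: "x \<in> C \<Longrightarrow> y \<in> C \<Longrightarrow> z \<in> C \<Longrightarrow> join x (join y z) = join y (join x z)"
  by (metis join_assoc join_comm)

lemma meet_join_distrib_right:
  "x \<in> C \<Longrightarrow> y \<in> C \<Longrightarrow> z \<in> C \<Longrightarrow> meet (join y z) x = join (meet y x) (meet z x)"
  by (metis meet_join_distrib meet_comm join_closed)

lemma join_meet_distrib:
  assumes "x \<in> C" "y \<in> C" "z \<in> C"
  shows "join x (meet y z) = meet (join x y) (join x z)"
proof -
  have "meet (join x y) (join x z) = join (meet (join x y) x) (meet (join x y) z)"
    using assms by (simp add: meet_join_distrib)
  also have "meet (join x y) x = x"
    using assms by (metis meet_comm meet_join_absorb join_closed)
  also have "meet (join x y) z = join (meet x z) (meet y z)"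
    using assms by (simp add: meet_join_distrib_right)
  also have "join x (join (meet x z) (meet y z)) = join x (meet y z)"
    using assms by (simp add: join_meet_absorb flip: join_assoc)
  finally show ?thesis ..
qed

lemma join_meet_distrib_right: "x \<in> C \<Longrightarrow> y \<in> C \<Longrightarrow> z \<in> C \<Longrightarrow> join (meet y z) x = meet (join y x) (join z x)"
  by (metis join_meet_distrib join_comm meet_closed)

lemma neg_unique:
  assumes "x \<in> C" "y \<in> C" "meet x y = bot" "join x y = top"
  shows "y = neg x"
proof -
  have "y = meet y (neg x)"
    using meet_join_distrib[of y x "neg x"] assms by (simp add: meet_comm[of y x])
  moreover have "neg x = meet (neg x) y"
    using meet_join_distrib[of "neg x" x y] assms by (simp add: meet_comm[of "neg x" x])
  ultimately show ?thesis using assms by (metis meet_comm neg_closed)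
qed

lemma neg_neg [simp]: "x \<in> C \<Longrightarrow> neg (neg x) = x"
  by (metis neg_unique neg_closed meet_neg join_neg meet_comm join_comm)

lemma neg_top [simp]: "neg top = bot"
  by (metis neg_unique top_closed bot_closed meet_bot join_bot)

lemma neg_meet:
  assumes "x \<in> C" "y \<in> C"
  shows "neg (meet x y) = join (neg x) (neg y)"
proof (rule neg_unique[symmetric])
  show "meet (meet x y) (join (neg x) (neg y)) = bot"
    using assms by (simp add: meet_join_distrib meet_assoc meet_left_commute[of x y])
  have "join x (join (neg x) (neg y)) = top" "join y (join (neg x) (neg y)) = top"
    using assms by (metis join_assoc join_comm join_neg join_top neg_closed)+
  then show "join (meet x y) (join (neg x) (neg y)) = top"
    using assms by (simp add: join_meet_distrib_right)
qed (use assms in auto)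

lemma neg_join:
  assumes "x \<in> C" "y \<in> C"
  shows "neg (join x y) = meet (neg x) (neg y)"
  using neg_meet[of "neg x" "neg y"] assms by (metis neg_neg neg_closed meet_closed)

lemma le_iff_meet: "le x y \<longleftrightarrow> meet x y = x"
  by (simp add: ia_le_def)

lemma le_iff_join: "x \<in> C \<Longrightarrow> y \<in> C \<Longrightarrow> le x y \<longleftrightarrow> join x y = y"
  unfolding le_iff_meet by (metis meet_join_absorb join_meet_absorb meet_comm join_comm)

lemma le_refl [simp]: "x \<in> C \<Longrightarrow> le x x"
  by (simp add: le_iff_meet)

lemma le_trans:
  assumes "x \<in> C" "y \<in> C" "z \<in> C" "le x y" "le y z"
  shows "le x z"
proof -
  have "meet x z = meet (meet x y) z" using assms(4) by (simp add: le_iff_meet)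
  also have "\<dots> = meet x (meet y z)" using assms(1-3) by (rule meet_assoc)
  also have "\<dots> = x" using assms(4,5) by (simp add: le_iff_meet)
  finally show ?thesis by (simp add: le_iff_meet)
qed

lemma le_antisym: "x \<in> C \<Longrightarrow> y \<in> C \<Longrightarrow> le x y \<Longrightarrow> le y x \<Longrightarrow> x = y"
  unfolding le_iff_meet by (metis meet_comm)

lemma meet_le1: "x \<in> C \<Longrightarrow> y \<in> C \<Longrightarrow> le (meet x y) x"
  unfolding le_iff_meet by (metis meet_assoc meet_comm meet_idem)

lemma meet_le2: "x \<in> C \<Longrightarrow> y \<in> C \<Longrightarrow> le (meet x y) y"
  unfolding le_iff_meet by (simp add: meet_assoc)

lemma le_meetI: "x \<in> C \<Longrightarrow> y \<in> C \<Longrightarrow> z \<in> C \<Longrightarrow> le z x \<Longrightarrow> le z y \<Longrightarrow> le z (meet x y)"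
  unfolding le_iff_meet by (simp flip: meet_assoc)

lemma join_ge1: "x \<in> C \<Longrightarrow> y \<in> C \<Longrightarrow> le x (join x y)"
  unfolding le_iff_meet by (rule meet_join_absorb)

lemma join_ge2: "x \<in> C \<Longrightarrow> y \<in> C \<Longrightarrow> le y (join x y)"
  unfolding le_iff_meet by (simp add: meet_join_absorb join_comm[of x y])

lemma join_leI: "x \<in> C \<Longrightarrow> y \<in> C \<Longrightarrow> z \<in> C \<Longrightarrow> le x z \<Longrightarrow> le y z \<Longrightarrow> le (join x y) z"
  by (simp add: le_iff_join join_assoc)

lemma le_top [simp]: "x \<in> C \<Longrightarrow> le x top"
  and bot_le [simp]: "x \<in> C \<Longrightarrow> le bot x"
  by (simp_all add: le_iff_meet)

lemma meet_mono:
  "x \<in> C \<Longrightarrow> y \<in> C \<Longrightarrow> x' \<in> C \<Longrightarrow> y' \<in> C \<Longrightarrow> le x x' \<Longrightarrow> le y y' \<Longrightarrow> le (meet x y) (meet x' y')"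
proof -
  assume "x \<in> C" "y \<in> C" "x' \<in> C" "y' \<in> C" "le x x'" "le y y'"
  then show "le (meet x y) (meet x' y')"
    using le_trans[OF _ _ _ meet_le1] le_trans[OF _ _ _ meet_le2] by (simp add: le_meetI)
qed

lemma meet_le_iff_le_neg_join:
  assumes "x \<in> C" "y \<in> C" "z \<in> C"
  shows "le (meet x y) z \<longleftrightarrow> le x (join (neg y) z)"
proof
  assume xy: "le (meet x y) z"
  have "le (meet x y) (join (neg y) z)"
    using le_trans[OF _ _ _ xy join_ge2] assms by simp
  moreover have "le (meet x (neg y)) (join (neg y) z)"
    using le_trans[OF _ _ _ meet_le2 join_ge1] assms by simp
  ultimately have "le (join (meet x y) (meet x (neg y))) (join (neg y) z)"
    using assms by (simp add: join_leI)
  moreover have "join (meet x y) (meet x (neg y)) = x"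
    using meet_join_distrib[of x y "neg y"] assms by simp
  ultimately show "le x (join (neg y) z)" by simp
next
  assume "le x (join (neg y) z)"
  then have "le (meet x y) (meet (join (neg y) z) y)"
    using assms by (intro meet_mono) auto
  also have "meet (join (neg y) z) y = meet z y"
    using assms by (simp add: meet_comm[of _ y] meet_join_distrib)
  finally show "le (meet x y) z"
    using le_trans[OF _ _ _ _ meet_le1] assms by simp
qed

lemma meet_neg_le_iff_le_join:
  "x \<in> C \<Longrightarrow> y \<in> C \<Longrightarrow> z \<in> C \<Longrightarrow> le (meet x (neg y)) z \<longleftrightarrow> le x (join y z)"
  using meet_le_iff_le_neg_join[of x "neg y" z] by simp

lemma le_meet_iff: "x \<in> C \<Longrightarrow> y \<in> C \<Longrightarrow> z \<in> C \<Longrightarrow> le z (meet x y) \<longleftrightarrow> le z x \<and> le z y"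
  by (meson le_meetI le_trans meet_closed meet_le1 meet_le2)

lemma join_le_iff: "x \<in> C \<Longrightarrow> y \<in> C \<Longrightarrow> z \<in> C \<Longrightarrow> le (join x y) z \<longleftrightarrow> le x z \<and> le y z"
  by (meson join_leI le_trans join_closed join_ge1 join_ge2)

fun cnf :: "('a \<times> 'a) list \<Rightarrow> 'a" where
  "cnf [] = top"
| "cnf ((u, v) # H) = meet (join (neg u) v) (cnf H)"

definition cnf_prod :: "('a \<times> 'a) list \<Rightarrow> ('a \<times> 'a) list \<Rightarrow> ('a \<times> 'a) list" where
  "cnf_prod H K = concat (map (\<lambda>(u, v). map (\<lambda>(u', v'). (meet u u', join v v')) K) H)"

lemma cnf_prod_simps [simp]:
  "cnf_prod [] K = []"
  "cnf_prod ((u, v) # H) K = map (\<lambda>(u', v'). (meet u u', join v v')) K @ cnf_prod H K"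
  by (simp_all add: cnf_prod_def)

lemma cnf_closed [simp]: "set H \<subseteq> C \<times> C \<Longrightarrow> cnf H \<in> C"
  by (induction H rule: cnf.induct) auto

lemma cnf_append:
  "set H \<subseteq> C \<times> C \<Longrightarrow> set K \<subseteq> C \<times> C \<Longrightarrow> cnf (H @ K) = meet (cnf H) (cnf K)"
  by (induction H rule: cnf.induct) (auto simp: meet_assoc)

lemma join_clause_cnf:
  assumes "u \<in> C" "v \<in> C" "set K \<subseteq> C \<times> C"
  shows "join (join (neg u) v) (cnf K) = cnf (map (\<lambda>(u', v'). (meet u u', join v v')) K)"
  using assms(3)
proof (induction K rule: cnf.induct)
  case (2 u' v' K)
  have "join (join (neg u) v) (join (neg u') v') = join (neg (meet u u')) (join v v')"
    using assms 2 by (simp add: neg_meet join_assoc join_comm[of v] join_left_commute)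
  then show ?case
    using assms 2 by (simp add: join_meet_distrib)
qed (use assms in simp)

lemma bounded_sublattice_carrier: "bounded_sublattice A C"
  by (simp add: bounded_sublattice_def)

lemma set_cnf_prod:
  "set (cnf_prod H K) = (\<lambda>((u, v), (u', v')). (meet u u', join v v')) ` (set H \<times> set K)"
  unfolding cnf_prod_def by force

lemma cnf_prod_sublattice:
  assumes "bounded_sublattice A D" "set H \<subseteq> D \<times> D" "set K \<subseteq> D \<times> D"
  shows "set (cnf_prod H K) \<subseteq> D \<times> D"
proof
  fix p assume "p \<in> set (cnf_prod H K)"
  then obtain u v u' v' where "p = (meet u u', join v v')" "(u, v) \<in> set H" "(u', v') \<in> set K"
    unfolding set_cnf_prod by auto
  moreover have "u \<in> D" "v \<in> D" "u' \<in> D" "v' \<in> D"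
    using calculation(2,3) assms(2,3) by auto
  ultimately show "p \<in> D \<times> D" using assms(1) by (simp add: bounded_sublattice_def)
qed

lemma cnf_join:
  "set H \<subseteq> C \<times> C \<Longrightarrow> set K \<subseteq> C \<times> C \<Longrightarrow> join (cnf H) (cnf K) = cnf (cnf_prod H K)"
proof (induction H rule: cnf.induct)
  case (2 u v H)
  have "set (cnf_prod [(u, v)] K) \<subseteq> C \<times> C" "set (cnf_prod H K) \<subseteq> C \<times> C"
    by (rule cnf_prod_sublattice[OF bounded_sublattice_carrier], use 2 in simp_all)+
  with 2 show ?case
    by (simp add: join_meet_distrib_right join_clause_cnf cnf_append)
qed simp

lemma meet_cnf_Cons_le_iff:
  assumes "p \<in> C" "q \<in> C" "u \<in> C" "v \<in> C" "set H \<subseteq> C \<times> C"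
  shows "le (meet p (cnf ((u, v) # H))) q \<longleftrightarrow>
    le (meet p (cnf H)) (join q u) \<and> le (meet (meet p v) (cnf H)) q"
proof -
  have "meet p (cnf ((u, v) # H)) = join (meet (meet p (cnf H)) (neg u)) (meet (meet p v) (cnf H))"
    using assms by (simp add: meet_join_distrib meet_comm[of _ "cnf H"] meet_left_commute[of _ p]
        flip: meet_assoc)
  with assms show ?thesis
    by (simp add: join_le_iff meet_neg_le_iff_le_join join_comm[of u q])
qed

lemma le_cnf_Cons_iff:
  assumes "x \<in> C" "u \<in> C" "v \<in> C" "set H \<subseteq> C \<times> C"
  shows "le x (cnf ((u, v) # H)) \<longleftrightarrow> le (meet u x) v \<and> le x (cnf H)"
  using assms by (simp add: le_meet_iff meet_comm[of u x] meet_le_iff_le_neg_join)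

definition cnf_forms :: "'a set \<Rightarrow> 'a set" where
  "cnf_forms D = cnf ` {H. set H \<subseteq> D \<times> D}"

lemma cnf_formsI: "set H \<subseteq> D \<times> D \<Longrightarrow> cnf H \<in> cnf_forms D"
  by (simp add: cnf_forms_def)

lemma cnf_formsE:
  assumes "x \<in> cnf_forms D"
  obtains H where "set H \<subseteq> D \<times> D" "x = cnf H"
  using assms unfolding cnf_forms_def by blast

context
  fixes D
  assumes D: "bounded_sublattice A D"
begin

lemma sublattice_closed: "x \<in> D \<Longrightarrow> x \<in> C"
  and sublattice_bot: "bot \<in> D"
  and sublattice_top: "top \<in> D"
  and sublattice_meet: "x \<in> D \<Longrightarrow> y \<in> D \<Longrightarrow> meet x y \<in> D"
  and sublattice_join: "x \<in> D \<Longrightarrow> y \<in> D \<Longrightarrow> join x y \<in> D"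
  using D unfolding bounded_sublattice_def by auto

lemma clause_lists_closed: "set H \<subseteq> D \<times> D \<Longrightarrow> set H \<subseteq> C \<times> C"
  using sublattice_closed by auto

lemma sublattice_subset_cnf_forms: "D \<subseteq> cnf_forms D"
proof
  fix u assume "u \<in> D"
  then have "cnf [(top, u)] \<in> cnf_forms D" by (intro cnf_formsI) (simp add: sublattice_top)
  then show "u \<in> cnf_forms D" using \<open>u \<in> D\<close> by (simp add: sublattice_closed)
qed

lemma cnf_forms_join:
  "x \<in> cnf_forms D \<Longrightarrow> y \<in> cnf_forms D \<Longrightarrow> join x y \<in> cnf_forms D"
  by (elim cnf_formsE) (simp add: cnf_join clause_lists_closed cnf_formsI cnf_prod_sublattice[OF D])

lemma cnf_forms_meet:
  "x \<in> cnf_forms D \<Longrightarrow> y \<in> cnf_forms D \<Longrightarrow> meet x y \<in> cnf_forms D"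
  by (elim cnf_formsE) (metis cnf_append clause_lists_closed cnf_formsI set_append Un_least)

lemma neg_cnf_forms: "set H \<subseteq> D \<times> D \<Longrightarrow> neg (cnf H) \<in> cnf_forms D"
proof (induction H rule: cnf.induct)
  case 1
  have "cnf [(top, bot)] \<in> cnf_forms D"
    by (intro cnf_formsI) (simp add: sublattice_top sublattice_bot)
  then show ?case by simp
next
  case (2 u v H)
  then have uv: "u \<in> C" "v \<in> C" "set H \<subseteq> C \<times> C"
    by (auto simp: sublattice_closed clause_lists_closed)
  have "neg (cnf ((u, v) # H)) = join (cnf [(top, u), (v, bot)]) (neg (cnf H))"
    using uv by (simp add: neg_meet neg_join)
  moreover have "cnf [(top, u), (v, bot)] \<in> cnf_forms D"
    using 2 by (intro cnf_formsI) (simp add: sublattice_top sublattice_bot)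
  ultimately show ?case using 2 by (simp add: cnf_forms_join)
qed

lemma cnf_forms_bool_closed: "bool_closed A (cnf_forms D)"
proof -
  have "bot \<in> cnf_forms D" "top \<in> cnf_forms D"
    using sublattice_subset_cnf_forms sublattice_bot sublattice_top by auto
  moreover have "neg x \<in> cnf_forms D" if "x \<in> cnf_forms D" for x
    using that by (auto elim: cnf_formsE simp: neg_cnf_forms)
  ultimately show ?thesis
    unfolding bool_closed_def by (simp add: cnf_forms_meet cnf_forms_join)
qed

lemma cnf_forms_least: "D \<subseteq> S \<Longrightarrow> bool_closed A S \<Longrightarrow> cnf_forms D \<subseteq> S"
proof
  fix x assume S: "D \<subseteq> S" "bool_closed A S" and "x \<in> cnf_forms D"
  then obtain H where "set H \<subseteq> D \<times> D" "x = cnf H" by (elim cnf_formsE)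
  then show "x \<in> S"
  proof (induction H arbitrary: x rule: cnf.induct)
    case (2 u v H)
    have "u \<in> S" "v \<in> S" "cnf H \<in> S" using 2 S(1) by auto
    then show ?case using 2 S(2) unfolding bool_closed_def by simp
  qed (use S in \<open>simp add: bool_closed_def\<close>)
qed

lemma cnf_forms_subset: "cnf_forms D \<subseteq> C"
  by (auto elim!: cnf_formsE simp: clause_lists_closed)

lemma generated_subalg_sublattice: "generated_subalg A D = cnf_forms D"
  by (rule generated_subalg_eqI)
    (use sublattice_subset_cnf_forms cnf_forms_subset cnf_forms_bool_closed cnf_forms_least in auto)

end

lemma bool_hom_eq_on_generated_subalg:
  assumes f: "bool_hom A B f" and g: "bool_hom A B g" and "\<forall>x\<in>X. f x = g x" "X \<subseteq> C"
    and "x \<in> generated_subalg A X"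
  shows "f x = g x"
proof -
  let ?E = "{x \<in> C. f x = g x}"
  have "bool_closed A ?E"
    unfolding bool_closed_def using bool_homD[OF f] bool_homD[OF g] by simp
  moreover have "X \<subseteq> ?E" using assms(3,4) by auto
  ultimately have "generated_subalg A X \<subseteq> ?E"
    unfolding generated_subalg_def by (intro Inter_lower) auto
  then show ?thesis using assms(5) by blast
qed

end

definition powerset_alg :: "'a set \<Rightarrow> 'a set ialg" where
  "powerset_alg X = \<lparr>ia_carrier = Pow X, ia_meet = (\<inter>), ia_join = (\<union>), ia_compl = (\<lambda>a. X - a),
     ia_bot = {}, ia_top = X, ia_box = id\<rparr>"

lemma powerset_alg_simps [simp]:
  "ia_carrier (powerset_alg X) = Pow X" "ia_meet (powerset_alg X) = (\<inter>)"
  "ia_join (powerset_alg X) = (\<union>)" "ia_compl (powerset_alg X) = (\<lambda>a. X - a)"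
  "ia_bot (powerset_alg X) = {}" "ia_top (powerset_alg X) = X"
  by (simp_all add: powerset_alg_def)

lemma boolean_alg_powerset_alg: "boolean_alg (powerset_alg X)"
  unfolding boolean_alg_def Let_def by auto

lemma bool_closed_update [simp]: "bool_closed (A\<lparr>ia_carrier := S, ia_box := b\<rparr>) T \<longleftrightarrow> bool_closed A T"
  by (simp add: bool_closed_def)

lemma boolean_alg_restrict:
  assumes "boolean_alg A" "S \<subseteq> ia_carrier A" "bool_closed A S"
  shows "boolean_alg (A\<lparr>ia_carrier := S, ia_box := b\<rparr>)"
proof -
  interpret bool_alg A by (rule bool_alg.intro) fact
  have C: "x \<in> S \<Longrightarrow> x \<in> C" for x using assms(2) by blast
  show ?thesis
    using assms(3) unfolding boolean_alg_def bool_closed_def Let_def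
    by (intro conjI ballI)
      (simp_all add: C meet_assoc join_assoc meet_join_absorb join_meet_absorb meet_join_distrib,
        simp_all add: C meet_comm join_comm)
qed

section \<open>Extending lattice homomorphisms to boolean homomorphisms\<close>

locale sublattice_hom = A: bool_alg A + B: bool_alg B
  for A :: "('a, 'm) ialg_scheme" and B :: "('b, 'n) ialg_scheme" +
  fixes D :: "'a set" and h :: "'a \<Rightarrow> 'b"
  assumes sublattice: "bounded_sublattice A D"
    and hom_closed: "u \<in> D \<Longrightarrow> h u \<in> B.C"
    and hom_meet: "u \<in> D \<Longrightarrow> v \<in> D \<Longrightarrow> h (A.meet u v) = B.meet (h u) (h v)"
    and hom_join: "u \<in> D \<Longrightarrow> v \<in> D \<Longrightarrow> h (A.join u v) = B.join (h u) (h v)"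
    and hom_bot: "h A.bot = B.bot"
    and hom_top: "h A.top = B.top"
begin

abbreviation map_clauses :: "('a \<times> 'a) list \<Rightarrow> ('b \<times> 'b) list" where
  "map_clauses \<equiv> map (map_prod h h)"

lemma map_clauses_closed: "set H \<subseteq> D \<times> D \<Longrightarrow> map_prod h h ` set H \<subseteq> B.C \<times> B.C"
  using hom_closed by auto

lemma hom_mono: "u \<in> D \<Longrightarrow> v \<in> D \<Longrightarrow> A.le u v \<Longrightarrow> B.le (h u) (h v)"
  by (simp add: A.le_iff_meet B.le_iff_meet flip: hom_meet)

text \<open>This is why the extension below is well defined: by \<open>meet_cnf_Cons_le_iff\<close> the
  inequality unfolds, clause by clause, into inequalities between elements of \<open>D\<close>.\<close>
lemma meet_cnf_le_transfer:
  assumes "set H \<subseteq> D \<times> D" "p \<in> D" "q \<in> D" "A.le (A.meet p (A.cnf H)) q"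
  shows "B.le (B.meet (h p) (B.cnf (map_clauses H))) (h q)"
  using assms
proof (induction H arbitrary: p q rule: A.cnf.induct)
  case 1
  then show ?case
    using hom_mono[of p q] by (simp add: A.sublattice_closed[OF sublattice] hom_closed)
next
  case (2 u v H)
  note closed = A.sublattice_closed[OF sublattice] A.clause_lists_closed[OF sublattice]
  have "A.le (A.meet p (A.cnf H)) (A.join q u)" "A.le (A.meet (A.meet p v) (A.cnf H)) q"
    using A.meet_cnf_Cons_le_iff[of p q u v H] 2(2-5) by (simp_all add: closed)
  then have "B.le (B.meet (h p) (B.cnf (map_clauses H))) (h (A.join q u))"
    "B.le (B.meet (h (A.meet p v)) (B.cnf (map_clauses H))) (h q)"
    using 2 A.sublattice_join[OF sublattice] A.sublattice_meet[OF sublattice] by simp_all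
  then show ?case
    using B.meet_cnf_Cons_le_iff[of "h p" "h q" "h u" "h v" "map_clauses H"] 2(2-4)
    by (simp add: hom_join hom_meet hom_closed map_clauses_closed)
qed

lemma cnf_le_transfer:
  assumes "set H \<subseteq> D \<times> D" "set K \<subseteq> D \<times> D" "A.le (A.cnf H) (A.cnf K)"
  shows "B.le (B.cnf (map_clauses H)) (B.cnf (map_clauses K))"
  using assms(2,3)
proof (induction K rule: A.cnf.induct)
  case (2 u v K)
  note closed = A.sublattice_closed[OF sublattice] A.clause_lists_closed[OF sublattice]
  have "A.le (A.meet u (A.cnf H)) v" "A.le (A.cnf H) (A.cnf K)"
    using A.le_cnf_Cons_iff[of "A.cnf H" u v K] 2(2,3) assms(1) by (simp_all add: closed)
  then have "B.le (B.meet (h u) (B.cnf (map_clauses H))) (h v)"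
    "B.le (B.cnf (map_clauses H)) (B.cnf (map_clauses K))"
    using 2 assms(1) meet_cnf_le_transfer by auto
  then show ?case
    using B.le_cnf_Cons_iff[of "B.cnf (map_clauses H)" "h u" "h v" "map_clauses K"] 2(2) assms(1)
    by (simp add: hom_closed map_clauses_closed)
qed (simp add: map_clauses_closed[OF assms(1)])

definition extension :: "'a \<Rightarrow> 'b" where
  "extension x = B.cnf (map_clauses (SOME H. set H \<subseteq> D \<times> D \<and> x = A.cnf H))"

lemma extension_cnf:
  assumes "set H \<subseteq> D \<times> D"
  shows "extension (A.cnf H) = B.cnf (map_clauses H)"
proof -
  define H' where "H' = (SOME H'. set H' \<subseteq> D \<times> D \<and> A.cnf H = A.cnf H')"
  have H': "set H' \<subseteq> D \<times> D" "A.cnf H = A.cnf H'"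
    using someI[of "\<lambda>H'. set H' \<subseteq> D \<times> D \<and> A.cnf H = A.cnf H'" H] assms
    unfolding H'_def by auto
  have "A.le (A.cnf H) (A.cnf H)"
    using assms by (simp add: A.clause_lists_closed[OF sublattice])
  then have "B.le (B.cnf (map_clauses H')) (B.cnf (map_clauses H))"
    "B.le (B.cnf (map_clauses H)) (B.cnf (map_clauses H'))"
    using H' assms cnf_le_transfer by auto
  then show ?thesis
    unfolding extension_def H'_def[symmetric]
    using H' assms by (simp add: B.le_antisym map_clauses_closed)
qed

lemma extension_sublattice: "u \<in> D \<Longrightarrow> extension u = h u"
  using extension_cnf[of "[(A.top, u)]"] A.sublattice_top[OF sublattice]
  by (simp add: A.sublattice_closed[OF sublattice] hom_closed hom_top)

lemma map_clauses_cnf_prod: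
  assumes "set H \<subseteq> D \<times> D" "set K \<subseteq> D \<times> D"
  shows "map_clauses (A.cnf_prod H K) = B.cnf_prod (map_clauses H) (map_clauses K)"
proof -
  have "map_clauses (map (\<lambda>(u', v'). (A.meet u u', A.join v v')) K) =
      map (\<lambda>(u', v'). (B.meet (h u) u', B.join (h v) v')) (map_clauses K)" if "u \<in> D" "v \<in> D" for u v
    using assms(2) that by (induction K) (auto simp: hom_meet hom_join)
  then show ?thesis using assms(1) by (induction H) auto
qed

lemma extension_bot: "extension A.bot = B.bot"
  and extension_top: "extension A.top = B.top"
  using extension_sublattice A.sublattice_bot[OF sublattice] A.sublattice_top[OF sublattice]
  by (simp_all add: hom_bot hom_top)

context
  assumes generated: "generated_subalg A D = A.C"
begin

lemma carrier_cnf_forms: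
  assumes "x \<in> A.C"
  obtains H where "set H \<subseteq> D \<times> D" "x = A.cnf H"
proof -
  have "x \<in> A.cnf_forms D"
    using generated assms by (simp add: A.generated_subalg_sublattice[OF sublattice])
  then show thesis by (elim A.cnf_formsE) (rule that)
qed

lemma extension_closed:
  assumes "x \<in> A.C"
  shows "extension x \<in> B.C"
proof -
  obtain H where "set H \<subseteq> D \<times> D" "x = A.cnf H"
    using assms by (rule carrier_cnf_forms)
  then show ?thesis by (simp add: extension_cnf map_clauses_closed)
qed

lemma extension_meet:
  assumes "x \<in> A.C" "y \<in> A.C"
  shows "extension (A.meet x y) = B.meet (extension x) (extension y)"
proof -
  obtain H where "set H \<subseteq> D \<times> D" "x = A.cnf H"
    using assms(1) by (rule carrier_cnf_forms)
  moreover obtain K where "set K \<subseteq> D \<times> D" "y = A.cnf K"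
    using assms(2) by (rule carrier_cnf_forms)
  ultimately show ?thesis
    using extension_cnf[of "H @ K"]
    by (simp add: A.cnf_append B.cnf_append A.clause_lists_closed[OF sublattice]
        map_clauses_closed extension_cnf)
qed

lemma extension_join:
  assumes "x \<in> A.C" "y \<in> A.C"
  shows "extension (A.join x y) = B.join (extension x) (extension y)"
proof -
  obtain H where "set H \<subseteq> D \<times> D" "x = A.cnf H"
    using assms(1) by (rule carrier_cnf_forms)
  moreover obtain K where "set K \<subseteq> D \<times> D" "y = A.cnf K"
    using assms(2) by (rule carrier_cnf_forms)
  ultimately show ?thesis
    using extension_cnf[of "A.cnf_prod H K"]
    by (simp add: A.cnf_join B.cnf_join A.clause_lists_closed[OF sublattice] map_clauses_closed
        extension_cnf map_clauses_cnf_prod A.cnf_prod_sublattice[OF sublattice])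
qed

lemma extension_neg:
  assumes "x \<in> A.C"
  shows "extension (A.neg x) = B.neg (extension x)"
proof (rule B.neg_unique)
  show "B.meet (extension x) (extension (A.neg x)) = B.bot"
    using assms by (simp flip: extension_meet add: extension_bot)
  show "B.join (extension x) (extension (A.neg x)) = B.top"
    using assms by (simp flip: extension_join add: extension_top)
qed (use assms in \<open>simp_all add: extension_closed\<close>)

lemma extension_bool_hom: "bool_hom A B extension"
  unfolding bool_hom_def
  by (auto simp: extension_closed extension_meet extension_join extension_neg extension_bot
      extension_top)

end

end

locale int_alg = bool_alg +
  assumes interior: "interior_alg A"
begin

abbreviation box where "box \<equiv> ia_box A"
abbreviation Op where "Op \<equiv> opens A"

lemma box_closed [simp]: "x \<in> C \<Longrightarrow> box x \<in> C"
  and box_top [simp]: "box top = top"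
  and box_meet: "x \<in> C \<Longrightarrow> y \<in> C \<Longrightarrow> box (meet x y) = meet (box x) (box y)"
  and box_le: "x \<in> C \<Longrightarrow> le (box x) x"
  and box_le_box_box: "x \<in> C \<Longrightarrow> le (box x) (box (box x))"
  using interior unfolding interior_alg_def by auto

lemma box_mono: "x \<in> C \<Longrightarrow> y \<in> C \<Longrightarrow> le x y \<Longrightarrow> le (box x) (box y)"
  unfolding le_iff_meet by (metis box_meet)

lemma opens_closed: "u \<in> Op \<Longrightarrow> u \<in> C"
  and box_open: "u \<in> Op \<Longrightarrow> box u = u"
  and opensI: "u \<in> C \<Longrightarrow> box u = u \<Longrightarrow> u \<in> Op"
  by (simp_all add: opens_def)

lemma box_in_opens: "x \<in> C \<Longrightarrow> box x \<in> Op"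
  by (intro opensI le_antisym box_le box_le_box_box) simp_all

lemma open_le_box_iff: "u \<in> Op \<Longrightarrow> x \<in> C \<Longrightarrow> le u (box x) \<longleftrightarrow> le u x"
  by (metis box_le box_mono box_open box_closed le_trans opens_closed)

lemma opens_sublattice: "bounded_sublattice A Op"
  unfolding bounded_sublattice_def
proof (intro conjI ballI)
  show "bot \<in> Op"
    using box_le[of bot] by (intro opensI le_antisym) simp_all
  fix u v assume "u \<in> Op" "v \<in> Op"
  then show "meet u v \<in> Op"
    by (intro opensI) (simp_all add: opens_closed box_open box_meet)
  have "le u (box (join u v))" "le v (box (join u v))"
    using \<open>u \<in> Op\<close> \<open>v \<in> Op\<close> by (simp_all add: open_le_box_iff opens_closed join_ge1 join_ge2)
  then show "join u v \<in> Op"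
    using \<open>u \<in> Op\<close> \<open>v \<in> Op\<close> by (intro opensI le_antisym box_le join_leI) (simp_all add: opens_closed)
qed (auto simp: opens_closed intro: opensI)

lemma opens_is_glb_pair: "u \<in> Op \<Longrightarrow> v \<in> Op \<Longrightarrow> is_glb Op le {u, v} (meet u v)"
  and opens_is_lub_pair: "u \<in> Op \<Longrightarrow> v \<in> Op \<Longrightarrow> is_lub Op le {u, v} (join u v)"
  and opens_is_glb_empty: "is_glb Op le {} top"
  and opens_is_lub_empty: "is_lub Op le {} bot"
  using opens_sublattice
  by (auto simp: is_glb_def is_lub_def bounded_sublattice_def opens_closed
      meet_le1 meet_le2 le_meetI join_ge1 join_ge2 join_leI)

lemma opens_antisym: "\<forall>x\<in>Op. \<forall>y\<in>Op. le x y \<and> le y x \<longrightarrow> x = y"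
  using le_antisym opens_closed by blast

lemma bool_hom_box_le:
  assumes "bool_hom A B f" "int_alg B" "f ` Op \<subseteq> opens B" "x \<in> C"
  shows "ia_le B (f (box x)) (ia_box B (f x))"
proof -
  interpret B: int_alg B by fact
  have "f (box x) \<in> B.Op" using assms(3,4) box_in_opens by blast
  moreover have "B.le (f (box x)) (f x)"
    using box_le[OF assms(4)] assms(4) bool_homD(1)[OF assms(1), of "box x" x]
    by (simp add: le_iff_meet B.le_iff_meet)
  moreover have "f x \<in> B.C" using assms(1,4) unfolding bool_hom_def by blast
  ultimately show ?thesis by (simp add: B.open_le_box_iff)
qed

end

lemma constructible_alg_int_alg: "constructible_alg A \<Longrightarrow> int_alg A"
  unfolding constructible_alg_def int_alg_def int_alg_axioms_def bool_alg_def interior_alg_def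
  by blast

lemma frame_hom_sublattice_hom:
  assumes "int_alg A" "int_alg B" and h: "frame_hom (opens A) (ia_le A) (opens B) (ia_le B) h"
  shows "sublattice_hom A B (opens A) h"
proof -
  interpret A: int_alg A by fact
  interpret B: int_alg B by fact
  have into: "u \<in> A.Op \<Longrightarrow> h u \<in> B.Op" for u
    using h unfolding frame_hom_def by auto
  have lub: "S \<subseteq> A.Op \<Longrightarrow> is_lub A.Op A.le S x \<Longrightarrow> is_lub B.Op B.le (h ` S) (h x)" for S x
    using h unfolding frame_hom_def by simp
  have glb: "S \<subseteq> A.Op \<Longrightarrow> finite S \<Longrightarrow> is_glb A.Op A.le S x \<Longrightarrow> is_glb B.Op B.le (h ` S) (h x)"
    for S x
    using h unfolding frame_hom_def by simp
  have "h (A.meet u v) = B.meet (h u) (h v)" "h (A.join u v) = B.join (h u) (h v)"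
    if uv: "u \<in> A.Op" "v \<in> A.Op" for u v
  proof -
    have "is_glb B.Op B.le {h u, h v} (h (A.meet u v))"
      using glb[OF _ _ A.opens_is_glb_pair[OF uv]] uv by simp
    then show "h (A.meet u v) = B.meet (h u) (h v)"
      using is_glb_unique[OF B.opens_antisym _ B.opens_is_glb_pair] into uv by blast
    have "is_lub B.Op B.le {h u, h v} (h (A.join u v))"
      using lub[OF _ A.opens_is_lub_pair[OF uv]] uv by simp
    then show "h (A.join u v) = B.join (h u) (h v)"
      using is_lub_unique[OF B.opens_antisym _ B.opens_is_lub_pair] into uv by blast
  qed
  moreover have "h A.bot = B.bot"
    using lub[OF _ A.opens_is_lub_empty] is_lub_unique[OF B.opens_antisym _ B.opens_is_lub_empty] by simp
  moreover have "h A.top = B.top"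
    using glb[OF _ _ A.opens_is_glb_empty] is_glb_unique[OF B.opens_antisym _ B.opens_is_glb_empty]
    by simp
  ultimately show ?thesis
    using A.opens_sublattice B.opens_closed[OF into]
    by (intro sublattice_hom.intro A.bool_alg_axioms B.bool_alg_axioms sublattice_hom_axioms.intro)
      simp_all
qed

lemma frame_hom_extends_to_constructible_hom:
  assumes "constructible_alg A" "int_alg B"
    and h: "frame_hom (opens A) (ia_le A) (opens B) (ia_le B) h"
  shows "\<exists>f. constructible_hom A B f \<and> (\<forall>a\<in>opens A. f a = h a)"
proof -
  interpret A: int_alg A using assms(1) by (rule constructible_alg_int_alg)
  interpret B: int_alg B by fact
  interpret sublattice_hom A B A.Op h
    using A.int_alg_axioms B.int_alg_axioms h by (rule frame_hom_sublattice_hom)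
  have generated: "generated_subalg A A.Op = A.C"
    using assms(1) by (simp add: constructible_alg_def essential_def)
  have agree: "\<forall>a\<in>A.Op. extension a = h a"
    by (simp add: extension_sublattice)
  have "constructible_hom A B extension"
    unfolding constructible_hom_def
  proof (intro conjI ballI)
    show "bool_hom A B extension" using generated by (rule extension_bool_hom)
    then show "B.le (extension (A.box a)) (B.box (extension a))" if "a \<in> A.C" for a
      using that agree h B.int_alg_axioms
      by (intro A.bool_hom_box_le) (auto simp: frame_hom_def)
    show "frame_hom A.Op A.le B.Op B.le extension"
      using h agree by (rule frame_hom_cong)
  qed
  with agree show ?thesis by blast
qed

lemma constructible_hom_eq_on_opens:
  assumes "constructible_alg A" "constructible_hom A B f" "constructible_hom A B g"
    and "\<forall>a\<in>opens A. f a = g a" "a \<in> ia_carrier A"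
  shows "f a = g a"
proof -
  interpret A: int_alg A using assms(1) by (rule constructible_alg_int_alg)
  show ?thesis
  proof (rule A.bool_hom_eq_on_generated_subalg)
    show "bool_hom A B f" "bool_hom A B g"
      using assms(2,3) by (simp_all add: constructible_hom_def)
    show "a \<in> generated_subalg A A.Op"
      using assms(1,5) by (simp add: constructible_alg_def essential_def)
  qed (use assms(4) A.opens_closed in auto)
qed

definition order_iso_on ::
  "('a \<Rightarrow> 'b) \<Rightarrow> 'a set \<Rightarrow> ('a \<Rightarrow> 'a \<Rightarrow> bool) \<Rightarrow> 'b set \<Rightarrow> ('b \<Rightarrow> 'b \<Rightarrow> bool) \<Rightarrow> bool" where
  "order_iso_on g L le M le' \<longleftrightarrow> bij_betw g L M \<and> (\<forall>x\<in>L. \<forall>y\<in>L. le' (g x) (g y) \<longleftrightarrow> le x y)"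

lemma order_iso_on_inv:
  assumes "order_iso_on g L le M le'"
  shows "order_iso_on (inv_into L g) M le' L le"
proof -
  have g: "bij_betw g L M" and ord: "\<And>x y. x \<in> L \<Longrightarrow> y \<in> L \<Longrightarrow> le' (g x) (g y) \<longleftrightarrow> le x y"
    using assms by (simp_all add: order_iso_on_def)
  have k: "bij_betw (inv_into L g) M L" using g by (rule bij_betw_inv_into)
  have "le (inv_into L g x) (inv_into L g y) \<longleftrightarrow> le' x y" if "x \<in> M" "y \<in> M" for x y
    using ord[OF bij_betwE[OF k, rule_format, OF that(1)] bij_betwE[OF k, rule_format, OF that(2)]]
      bij_betw_inv_into_right[OF g] that by simp
  with k show ?thesis by (simp add: order_iso_on_def)
qed

lemma order_iso_on_dual:
  "order_iso_on g L le M le' \<Longrightarrow> order_iso_on g L (\<lambda>x y. le y x) M (\<lambda>x y. le' y x)"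
  by (simp add: order_iso_on_def)

lemma is_glb_iff_is_lub_dual: "is_glb L le S x \<longleftrightarrow> is_lub L (\<lambda>x y. le y x) S x"
  by (simp add: is_glb_def is_lub_def)

lemma order_iso_is_lub_iff:
  assumes "order_iso_on g L le M le'" "S \<subseteq> L" "x \<in> L"
  shows "is_lub M le' (g ` S) (g x) \<longleftrightarrow> is_lub L le S x"
proof -
  have M: "M = g ` L" and ord: "\<And>x y. x \<in> L \<Longrightarrow> y \<in> L \<Longrightarrow> le' (g x) (g y) \<longleftrightarrow> le x y"
    using assms(1) by (auto simp: order_iso_on_def bij_betw_def)
  have "(\<forall>y\<in>g ` L. P y) \<longleftrightarrow> (\<forall>y\<in>L. P (g y))" for P by blast
  then show ?thesis
    unfolding is_lub_def M using assms(2,3) ord by (auto simp: subset_iff)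
qed

lemma order_iso_is_glb_iff:
  "order_iso_on g L le M le' \<Longrightarrow> S \<subseteq> L \<Longrightarrow> x \<in> L \<Longrightarrow> is_glb M le' (g ` S) (g x) \<longleftrightarrow> is_glb L le S x"
  unfolding is_glb_iff_is_lub_dual by (rule order_iso_is_lub_iff[OF order_iso_on_dual])

lemma order_iso_frame_hom:
  assumes "order_iso_on g L le M le'"
  shows "frame_hom L le M le' g"
  unfolding frame_hom_def
proof (intro conjI allI impI)
  show "g ` L \<subseteq> M" using assms by (simp add: order_iso_on_def bij_betw_def)
  fix S x assume "S \<subseteq> L"
  show "is_lub M le' (g ` S) (g x)" if "is_lub L le S x"
    using that order_iso_is_lub_iff[OF assms \<open>S \<subseteq> L\<close>] by (simp add: is_lub_def)
  show "is_glb M le' (g ` S) (g x)" if "finite S" "is_glb L le S x"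
    using that order_iso_is_glb_iff[OF assms \<open>S \<subseteq> L\<close>] by (simp add: is_glb_def)
qed

lemma order_iso_is_frame:
  assumes iso: "order_iso_on g L le M le'" and frame: "is_frame L le"
  shows "is_frame M le'"
proof -
  define k where "k = inv_into L g"
  have k: "order_iso_on k M le' L le" unfolding k_def using iso by (rule order_iso_on_inv)
  then have k_bij: "bij_betw k M L" and k_le: "\<And>x y. x \<in> M \<Longrightarrow> y \<in> M \<Longrightarrow> le (k x) (k y) \<longleftrightarrow> le' x y"
    by (simp_all add: order_iso_on_def)
  have k_in: "x \<in> M \<Longrightarrow> k x \<in> L" for x using k_bij by (simp add: bij_betw_apply)
  have kT: "T \<subseteq> M \<Longrightarrow> k ` T \<subseteq> L" for T using k_in by blast
  have k_onto: "z \<in> L \<Longrightarrow> \<exists>y\<in>M. z = k y" for z using k_bij by (auto simp: bij_betw_def)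
  have lub: "T \<subseteq> M \<Longrightarrow> y \<in> M \<Longrightarrow> is_lub M le' T y \<longleftrightarrow> is_lub L le (k ` T) (k y)" for T y
    using order_iso_is_lub_iff[OF k] by simp
  have glb: "T \<subseteq> M \<Longrightarrow> y \<in> M \<Longrightarrow> is_glb M le' T y \<longleftrightarrow> is_glb L le (k ` T) (k y)" for T y
    using order_iso_is_glb_iff[OF k] by simp
  have frame_lub: "\<forall>S\<subseteq>L. \<exists>z. is_lub L le S z"
    and frame_glb: "\<forall>S\<subseteq>L. finite S \<longrightarrow> (\<exists>z. is_glb L le S z)"
    and frame_distrib: "\<forall>a\<in>L. \<forall>S\<subseteq>L. \<forall>x y. is_lub L le S x \<longrightarrow> is_glb L le {a, x} y \<longrightarrow>
      is_lub L le {z. \<exists>s\<in>S. is_glb L le {a, s} z} y"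
    using frame by (simp_all add: is_frame_def)
  have lub_ex: "\<exists>y. is_lub M le' T y" if T: "T \<subseteq> M" for T
  proof -
    obtain z where z: "is_lub L le (k ` T) z" using frame_lub kT[OF T] by blast
    then have "z \<in> L" by (simp add: is_lub_def)
    then obtain y where "y \<in> M" "z = k y" using k_onto by blast
    then show ?thesis using z lub[OF T] by blast
  qed
  have glb_ex: "\<exists>y. is_glb M le' T y" if T: "T \<subseteq> M" and fin: "finite T" for T
  proof -
    obtain z where z: "is_glb L le (k ` T) z" using frame_glb kT[OF T] fin by blast
    then have "z \<in> L" by (simp add: is_glb_def)
    then obtain y where "y \<in> M" "z = k y" using k_onto by blast
    then show ?thesis using z glb[OF T] by blast
  qed
  have distrib: "is_lub M le' {z. \<exists>s\<in>T. is_glb M le' {a, s} z} y"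
    if a: "a \<in> M" and T: "T \<subseteq> M" and x: "is_lub M le' T x" and y: "is_glb M le' {a, x} y"
    for a T x y
  proof -
    let ?Z = "{z. \<exists>s\<in>T. is_glb M le' {a, s} z}"
    have "x \<in> M" "y \<in> M" using x y by (simp_all add: is_lub_def is_glb_def)
    then have "is_lub L le (k ` T) (k x)" "is_glb L le {k a, k x} (k y)"
      using a T x y lub glb[of "{a, x}"] by simp_all
    then have "is_lub L le {z. \<exists>s\<in>k ` T. is_glb L le {k a, s} z} (k y)"
      using frame_distrib k_in[OF a] kT[OF T] by blast
    moreover have "k ` ?Z = {z. \<exists>s\<in>k ` T. is_glb L le {k a, s} z}"
    proof (intro equalityI subsetI)
      fix z assume "z \<in> k ` ?Z"
      then obtain s w where "s \<in> T" "is_glb M le' {a, s} w" "z = k w" by blast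
      moreover have "w \<in> M" using calculation(2) by (simp add: is_glb_def)
      ultimately show "z \<in> {z. \<exists>s\<in>k ` T. is_glb L le {k a, s} z}"
        using a T glb[of "{a, s}" w] by auto
    next
      fix z assume "z \<in> {z. \<exists>s\<in>k ` T. is_glb L le {k a, s} z}"
      then obtain s where s: "s \<in> T" "is_glb L le {k a, k s} z" by blast
      then have "z \<in> L" by (simp add: is_glb_def)
      then obtain w where "w \<in> M" "z = k w" using k_onto by blast
      with s have "is_glb M le' {a, s} w" using a T glb[of "{a, s}" w] by auto
      then show "z \<in> k ` ?Z" using s(1) \<open>z = k w\<close> by blast
    qed
    moreover have "?Z \<subseteq> M" by (auto simp: is_glb_def)
    ultimately show ?thesis using lub \<open>y \<in> M\<close> by simp
  qed
  have po: "partial_order_on' L le" using frame by (simp add: is_frame_def)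
  have "partial_order_on' M le'"
    unfolding partial_order_on'_def
  proof (intro conjI ballI impI)
    fix x y z assume xyz: "x \<in> M" "y \<in> M" "z \<in> M"
    have "le (k x) (k x)" using po k_in[OF xyz(1)] by (simp add: partial_order_on'_def)
    then show "le' x x" using k_le[OF xyz(1) xyz(1)] by simp
    assume "le' x y \<and> le' y z"
    then have "le (k x) (k y)" "le (k y) (k z)" using k_le xyz by simp_all
    then have "le (k x) (k z)"
      using po k_in xyz unfolding partial_order_on'_def by blast
    then show "le' x z" using k_le xyz by simp
  next
    fix x y assume xy: "x \<in> M" "y \<in> M" "le' x y \<and> le' y x"
    then have "le (k x) (k y)" "le (k y) (k x)" using k_le by simp_all
    then have "k x = k y"
      using po k_in xy(1,2) unfolding partial_order_on'_def by blast
    then show "x = y" using xy(1,2) k_bij by (simp add: bij_betw_def inj_on_def)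
  qed
  then show ?thesis
    unfolding is_frame_def by (simp add: lub_ex glb_ex distrib)
qed

lemma order_iso_frame_iso:
  assumes "order_iso_on g L le M le'"
  shows "frame_iso M le' L le"
  unfolding frame_iso_def
proof (intro exI conjI ballI)
  show "frame_hom M le' L le (inv_into L g)"
    using assms by (intro order_iso_frame_hom order_iso_on_inv)
  show "frame_hom L le M le' g"
    using assms by (rule order_iso_frame_hom)
  have "bij_betw g L M" using assms by (simp add: order_iso_on_def)
  then show "x \<in> M \<Longrightarrow> g (inv_into L g x) = x" "y \<in> L \<Longrightarrow> inv_into L g (g y) = y" for x y
    by (simp_all add: bij_betw_inv_into_right bij_betw_inv_into_left)
qed

section \<open>Frames and their prime filters\<close>

locale frame =
  fixes L :: "'c set" and le :: "'c \<Rightarrow> 'c \<Rightarrow> bool"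
  assumes frame: "is_frame L le"
begin

lemma partial_order: "partial_order_on' L le"
  using frame by (simp add: is_frame_def)

lemma le_refl: "x \<in> L \<Longrightarrow> le x x"
  using partial_order unfolding partial_order_on'_def by blast

lemma antisym: "\<forall>x\<in>L. \<forall>y\<in>L. le x y \<and> le y x \<longrightarrow> x = y"
  using partial_order unfolding partial_order_on'_def by (elim conjE)

lemma le_antisym: "x \<in> L \<Longrightarrow> y \<in> L \<Longrightarrow> le x y \<Longrightarrow> le y x \<Longrightarrow> x = y"
  using antisym by blast

lemma le_trans: "x \<in> L \<Longrightarrow> y \<in> L \<Longrightarrow> z \<in> L \<Longrightarrow> le x y \<Longrightarrow> le y z \<Longrightarrow> le x z"
  using partial_order unfolding partial_order_on'_def by blast

definition lub :: "'c set \<Rightarrow> 'c" where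
  "lub S = (SOME x. is_lub L le S x)"

definition glb :: "'c set \<Rightarrow> 'c" where
  "glb S = (SOME x. is_glb L le S x)"

lemma is_lub_lub: "S \<subseteq> L \<Longrightarrow> is_lub L le S (lub S)"
  using frame unfolding lub_def is_frame_def by (simp add: someI_ex)

lemma is_glb_glb: "S \<subseteq> L \<Longrightarrow> finite S \<Longrightarrow> is_glb L le S (glb S)"
  using frame unfolding glb_def is_frame_def by (simp add: someI_ex)

lemma lub_eqI: "is_lub L le S x \<Longrightarrow> lub S = x"
  unfolding lub_def by (rule some_equality) (auto intro: is_lub_unique[OF antisym])

lemma lub_closed: "S \<subseteq> L \<Longrightarrow> lub S \<in> L"
  and lub_upper: "S \<subseteq> L \<Longrightarrow> s \<in> S \<Longrightarrow> le s (lub S)"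
  and lub_least: "S \<subseteq> L \<Longrightarrow> x \<in> L \<Longrightarrow> \<forall>s\<in>S. le s x \<Longrightarrow> le (lub S) x"
  using is_lub_lub[of S] by (simp_all add: is_lub_def)

definition meet :: "'c \<Rightarrow> 'c \<Rightarrow> 'c" where
  "meet u v = glb {u, v}"

definition join :: "'c \<Rightarrow> 'c \<Rightarrow> 'c" where
  "join u v = lub {u, v}"

definition top :: 'c where
  "top = glb {}"

definition bot :: 'c where
  "bot = lub {}"

lemma is_glb_meet: "u \<in> L \<Longrightarrow> v \<in> L \<Longrightarrow> is_glb L le {u, v} (meet u v)"
  unfolding meet_def by (rule is_glb_glb) auto

lemma meet_closed [simp]: "u \<in> L \<Longrightarrow> v \<in> L \<Longrightarrow> meet u v \<in> L"
  and meet_le1: "u \<in> L \<Longrightarrow> v \<in> L \<Longrightarrow> le (meet u v) u"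
  and meet_le2: "u \<in> L \<Longrightarrow> v \<in> L \<Longrightarrow> le (meet u v) v"
  and le_meetI: "u \<in> L \<Longrightarrow> v \<in> L \<Longrightarrow> z \<in> L \<Longrightarrow> le z u \<Longrightarrow> le z v \<Longrightarrow> le z (meet u v)"
  using is_glb_meet[of u v] by (simp_all add: is_glb_def)

lemma join_closed [simp]: "u \<in> L \<Longrightarrow> v \<in> L \<Longrightarrow> join u v \<in> L"
  and join_ge1: "u \<in> L \<Longrightarrow> v \<in> L \<Longrightarrow> le u (join u v)"
  and join_ge2: "u \<in> L \<Longrightarrow> v \<in> L \<Longrightarrow> le v (join u v)"
  and join_leI: "u \<in> L \<Longrightarrow> v \<in> L \<Longrightarrow> z \<in> L \<Longrightarrow> le u z \<Longrightarrow> le v z \<Longrightarrow> le (join u v) z"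
  unfolding join_def using lub_closed lub_upper lub_least by simp_all

lemma top_closed [simp]: "top \<in> L"
  and le_top: "x \<in> L \<Longrightarrow> le x top"
  using is_glb_glb[of "{}"] by (simp_all add: top_def is_glb_def)

lemma bot_closed [simp]: "bot \<in> L"
  and bot_le: "x \<in> L \<Longrightarrow> le bot x"
  unfolding bot_def using lub_closed lub_least by simp_all

lemma meet_mono_left:
  assumes "u \<in> L" "u' \<in> L" "v \<in> L" "le u u'"
  shows "le (meet u v) (meet u' v)"
proof (rule le_meetI)
  show "le (meet u v) u'" using assms le_trans[OF _ _ _ meet_le1] by simp
qed (use assms meet_le2 in simp_all)

lemma meet_comm: "meet u v = meet v u"
  by (simp add: meet_def insert_commute)

lemma distrib:
  "a \<in> L \<Longrightarrow> S \<subseteq> L \<Longrightarrow> is_lub L le S x \<Longrightarrow> is_glb L le {a, x} y \<Longrightarrow>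
    is_lub L le {z. \<exists>s\<in>S. is_glb L le {a, s} z} y"
proof -
  have "\<forall>a\<in>L. \<forall>S\<subseteq>L. \<forall>x y. is_lub L le S x \<longrightarrow> is_glb L le {a, x} y \<longrightarrow>
      is_lub L le {z. \<exists>s\<in>S. is_glb L le {a, s} z} y"
    using frame unfolding is_frame_def by (elim conjE)
  then show "a \<in> L \<Longrightarrow> S \<subseteq> L \<Longrightarrow> is_lub L le S x \<Longrightarrow> is_glb L le {a, x} y \<Longrightarrow>
      is_lub L le {z. \<exists>s\<in>S. is_glb L le {a, s} z} y"
    by blast
qed

lemma is_glb_pair_iff: "u \<in> L \<Longrightarrow> v \<in> L \<Longrightarrow> is_glb L le {u, v} z \<longleftrightarrow> z = meet u v"
  using is_glb_meet is_glb_unique[OF antisym] by blast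

lemma meet_lub_le:
  assumes S: "S \<subseteq> L" and p: "p \<in> L" and q: "q \<in> L" and le_q: "\<forall>s\<in>S. le (meet s p) q"
  shows "le (meet (lub S) p) q"
proof -
  have "is_lub L le {z. \<exists>s\<in>S. is_glb L le {p, s} z} (meet p (lub S))"
    using distrib[OF p S is_lub_lub[OF S] is_glb_meet[OF p lub_closed[OF S]]] .
  moreover have "is_glb L le {p, s} z \<longleftrightarrow> z = meet s p" if "s \<in> S" for s z
    using that S p by (simp add: is_glb_pair_iff subset_iff meet_comm)
  then have "{z. \<exists>s\<in>S. is_glb L le {p, s} z} = (\<lambda>s. meet s p) ` S"
    by auto
  ultimately show ?thesis
    using le_q q by (simp add: is_lub_def meet_comm)
qed

lemma meet_join_le:
  assumes "u \<in> L" "v \<in> L" "w \<in> L"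
  shows "le (meet u (join v w)) (join (meet u v) (meet u w))"
proof -
  have "le (meet (lub {v, w}) u) (join (meet u v) (meet u w))"
    using assms by (intro meet_lub_le) (simp_all add: meet_comm[of _ u] join_ge1 join_ge2)
  then show ?thesis by (simp add: join_def meet_comm)
qed

definition lattice_filter :: "'c set \<Rightarrow> bool" where
  "lattice_filter F \<longleftrightarrow> F \<subseteq> L \<and> (\<forall>x\<in>F. \<forall>y\<in>L. le x y \<longrightarrow> y \<in> F) \<and> (\<forall>x\<in>F. \<forall>y\<in>F. meet x y \<in> F)"

definition prime_filter :: "'c set \<Rightarrow> bool" where
  "prime_filter P \<longleftrightarrow> lattice_filter P \<and> top \<in> P \<and> bot \<notin> P \<and>
     (\<forall>x\<in>L. \<forall>y\<in>L. join x y \<in> P \<longrightarrow> x \<in> P \<or> y \<in> P)"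

lemma lattice_filter_principal:
  assumes "u \<in> L"
  shows "lattice_filter {x \<in> L. le u x}"
  unfolding lattice_filter_def
proof (intro conjI ballI impI)
  fix x y assume x: "x \<in> {x \<in> L. le u x}"
  show "y \<in> {x \<in> L. le u x}" if "y \<in> L" "le x y"
    using x that assms le_trans[of u x y] by simp
  show "meet x y \<in> {x \<in> L. le u x}" if "y \<in> {x \<in> L. le u x}"
    using x that assms by (simp add: le_meetI)
qed auto

lemma lattice_filter_Union_chain:
  assumes "\<forall>F\<in>C. lattice_filter F" "\<forall>F\<in>C. \<forall>G\<in>C. F \<subseteq> G \<or> G \<subseteq> F"
  shows "lattice_filter (\<Union>C)"
  unfolding lattice_filter_def
proof (intro conjI ballI impI)
  show "\<Union>C \<subseteq> L" using assms(1) by (auto simp: lattice_filter_def)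
  fix x y assume "x \<in> \<Union>C"
  then obtain F where F: "F \<in> C" "x \<in> F" by blast
  show "y \<in> \<Union>C" if "y \<in> L" "le x y"
    using F that assms(1) unfolding lattice_filter_def by blast
  assume "y \<in> \<Union>C"
  then obtain G where G: "G \<in> C" "y \<in> G" by blast
  have meet_closed: "H \<in> C \<Longrightarrow> x \<in> H \<Longrightarrow> y \<in> H \<Longrightarrow> meet x y \<in> H" for H
    using assms(1) unfolding lattice_filter_def by blast
  from assms(2) F G consider "F \<subseteq> G" | "G \<subseteq> F" by blast
  then show "meet x y \<in> \<Union>C"
    by cases (use F G meet_closed in blast)+
qed

lemma lattice_filter_adjoin:
  assumes F: "lattice_filter F" and x: "x \<in> L"
  shows "lattice_filter {z \<in> L. \<exists>m\<in>F. le (meet m x) z}" (is "lattice_filter ?G")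
  unfolding lattice_filter_def
proof (intro conjI ballI impI)
  have FL: "m \<in> F \<Longrightarrow> m \<in> L" for m using F by (auto simp: lattice_filter_def)
  show "?G \<subseteq> L" by blast
  fix a b assume "a \<in> ?G"
  then obtain m where m: "m \<in> F" "m \<in> L" "le (meet m x) a" "a \<in> L" using FL by blast
  show "b \<in> ?G" if "b \<in> L" "le a b"
  proof -
    have "le (meet m x) b" using le_trans[of "meet m x" a b] m that x by simp
    then show ?thesis using m(1) that(1) by blast
  qed
  assume "b \<in> ?G"
  then obtain n where n: "n \<in> F" "n \<in> L" "le (meet n x) b" "b \<in> L" using FL by blast
  have mn: "meet m n \<in> F" using F m(1) n(1) by (simp add: lattice_filter_def)
  have "le (meet (meet m n) x) (meet m x)" "le (meet (meet m n) x) (meet n x)"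
    using m(2) n(2) x by (simp_all add: meet_mono_left meet_le1 meet_le2)
  then have "le (meet (meet m n) x) a" "le (meet (meet m n) x) b"
    using m n x le_trans[of "meet (meet m n) x" "meet m x" a] le_trans[of "meet (meet m n) x" "meet n x" b]
    by simp_all
  then have "le (meet (meet m n) x) (meet a b)"
    using m(2,4) n(2,4) x by (simp add: le_meetI)
  then show "meet a b \<in> ?G" using mn m(4) n(4) by auto
qed

lemma maximal_filter_prime:
  assumes M: "lattice_filter M" "u \<in> M" "v \<in> L" "v \<notin> M"
    and maximal: "\<And>G. lattice_filter G \<Longrightarrow> v \<notin> G \<Longrightarrow> M \<subseteq> G \<Longrightarrow> G = M"
  shows "prime_filter M"
proof -
  have M_sub: "m \<in> M \<Longrightarrow> m \<in> L" for m using M(1) by (auto simp: lattice_filter_def)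
  have up: "m \<in> M \<Longrightarrow> y \<in> L \<Longrightarrow> le m y \<Longrightarrow> y \<in> M" for m y
    using M(1) unfolding lattice_filter_def by blast
  have meet_in: "m \<in> M \<Longrightarrow> n \<in> M \<Longrightarrow> meet m n \<in> M" for m n
    using M(1) unfolding lattice_filter_def by blast
  \<comment> \<open>otherwise the filter generated by \<open>M\<close> and \<open>x\<close> would be a larger filter avoiding \<open>v\<close>\<close>
  have escape: "\<exists>m\<in>M. le (meet m x) v" if x: "x \<in> L" "x \<notin> M" for x
  proof (rule ccontr)
    assume none: "\<not> (\<exists>m\<in>M. le (meet m x) v)"
    let ?G = "{z \<in> L. \<exists>m\<in>M. le (meet m x) z}"
    have "M \<subseteq> ?G" using M_sub x(1) meet_le1 by blast
    then have "?G = M"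
      using maximal lattice_filter_adjoin[OF M(1) x(1)] none by blast
    moreover have "x \<in> ?G" using M(2) M_sub x(1) meet_le2 by blast
    ultimately show False using x(2) by blast
  qed
  have "x \<in> M \<or> y \<in> M" if xy: "x \<in> L" "y \<in> L" "join x y \<in> M" for x y
  proof (rule ccontr)
    assume "\<not> (x \<in> M \<or> y \<in> M)"
    then obtain m n where mn: "m \<in> M" "n \<in> M" "le (meet m x) v" "le (meet n y) v"
      using escape xy by blast
    let ?k = "meet m n"
    have L: "m \<in> L" "n \<in> L" "?k \<in> L" using mn M_sub by auto
    have "le (meet ?k x) (meet m x)" "le (meet ?k y) (meet n y)"
      using L xy meet_mono_left[of ?k m x] meet_mono_left[of ?k n y] by (simp_all add: meet_le1 meet_le2)
    then have "le (meet ?k x) v" "le (meet ?k y) v"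
      using mn L xy M(3) le_trans[of "meet ?k x" "meet m x" v] le_trans[of "meet ?k y" "meet n y" v]
      by simp_all
    then have "le (join (meet ?k x) (meet ?k y)) v"
      using L xy M(3) by (simp add: join_leI)
    then have "le (meet ?k (join x y)) v"
      using meet_join_le[of ?k x y] L xy M(3)
        le_trans[of "meet ?k (join x y)" "join (meet ?k x) (meet ?k y)" v] by simp
    moreover have "meet ?k (join x y) \<in> M" using mn xy(3) meet_in by simp
    ultimately have "v \<in> M" using up M(3) by simp
    then show False using M(4) by blast
  qed
  moreover have "top \<in> M" using up[OF M(2) top_closed le_top[OF M_sub[OF M(2)]]] .
  moreover have "bot \<notin> M" using up[OF _ M(3) bot_le[OF M(3)]] M(4) by blast
  ultimately show ?thesis using M(1) by (simp add: prime_filter_def)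
qed

lemma prime_filter_separation:
  assumes "u \<in> L" "v \<in> L" "\<not> le u v"
  obtains P where "prime_filter P" "u \<in> P" "v \<notin> P"
proof -
  let ?FF = "{F. lattice_filter F \<and> u \<in> F \<and> v \<notin> F}"
  have "{x \<in> L. le u x} \<in> ?FF"
    using assms lattice_filter_principal le_refl by simp
  moreover have "\<Union>C \<in> ?FF" if "C \<noteq> {}" "subset.chain ?FF C" for C
    using that lattice_filter_Union_chain[of C] unfolding subset_chain_def by blast
  ultimately obtain M where "M \<in> ?FF" and max: "\<forall>G\<in>?FF. M \<subseteq> G \<longrightarrow> G = M"
    using subset_Zorn_nonempty[of ?FF] by blast
  then have "prime_filter M"
    using maximal_filter_prime[of M u v] assms(2) by blast
  with \<open>M \<in> ?FF\<close> show thesis using that by blast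
qed

definition prime_filters :: "'c set set" where
  "prime_filters = {P. prime_filter P}"

definition stone :: "'c \<Rightarrow> 'c set set" where
  "stone u = {P \<in> prime_filters. u \<in> P}"

lemma prime_filters_up: "P \<in> prime_filters \<Longrightarrow> x \<in> P \<Longrightarrow> y \<in> L \<Longrightarrow> le x y \<Longrightarrow> y \<in> P"
  by (auto simp: prime_filters_def prime_filter_def lattice_filter_def)

lemma prime_filters_meet_iff:
  assumes "P \<in> prime_filters" "u \<in> L" "v \<in> L"
  shows "meet u v \<in> P \<longleftrightarrow> u \<in> P \<and> v \<in> P"
proof
  assume "meet u v \<in> P"
  then show "u \<in> P \<and> v \<in> P"
    using prime_filters_up[OF assms(1)] assms(2,3) meet_le1 meet_le2 by (meson meet_closed)
next
  assume "u \<in> P \<and> v \<in> P"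
  then show "meet u v \<in> P"
    using assms(1) by (simp add: prime_filters_def prime_filter_def lattice_filter_def)
qed

lemma prime_filters_join_iff:
  assumes "P \<in> prime_filters" "u \<in> L" "v \<in> L"
  shows "join u v \<in> P \<longleftrightarrow> u \<in> P \<or> v \<in> P"
proof
  assume "join u v \<in> P"
  then show "u \<in> P \<or> v \<in> P"
    using assms by (simp add: prime_filters_def prime_filter_def)
next
  assume "u \<in> P \<or> v \<in> P"
  then show "join u v \<in> P"
    using prime_filters_up[OF assms(1)] assms(2,3) join_ge1 join_ge2 by (meson join_closed)
qed

lemma stone_subset_iff:
  assumes "u \<in> L" "v \<in> L"
  shows "stone u \<subseteq> stone v \<longleftrightarrow> le u v"
proof
  assume "stone u \<subseteq> stone v"
  show "le u v"
  proof (rule ccontr)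
    assume "\<not> le u v"
    then obtain P where "prime_filter P" "u \<in> P" "v \<notin> P"
      by (rule prime_filter_separation[OF assms])
    with \<open>stone u \<subseteq> stone v\<close> show False by (auto simp: stone_def prime_filters_def)
  qed
next
  assume "le u v"
  then show "stone u \<subseteq> stone v"
    using prime_filters_up assms(2) by (auto simp: stone_def)
qed

lemma stone_meet: "u \<in> L \<Longrightarrow> v \<in> L \<Longrightarrow> stone (meet u v) = stone u \<inter> stone v"
  and stone_join: "u \<in> L \<Longrightarrow> v \<in> L \<Longrightarrow> stone (join u v) = stone u \<union> stone v"
  by (auto simp: stone_def prime_filters_meet_iff prime_filters_join_iff)

lemma stone_top: "stone top = prime_filters"
  and stone_bot: "stone bot = {}"
  by (auto simp: stone_def prime_filters_def prime_filter_def)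

lemma order_iso_stone: "order_iso_on stone L le (stone ` L) (\<subseteq>)"
proof -
  have "x = y" if "x \<in> L" "y \<in> L" "stone x = stone y" for x y
    using that stone_subset_iff[of x y] stone_subset_iff[of y x] by (auto intro: le_antisym)
  then show ?thesis
    unfolding order_iso_on_def bij_betw_def inj_on_def by (simp add: stone_subset_iff)
qed

end

section \<open>The constructible algebra of a frame\<close>

context frame
begin

interpretation P: bool_alg "powerset_alg prime_filters"
  by (rule bool_alg.intro) (rule boolean_alg_powerset_alg)

lemma stone_sublattice: "bounded_sublattice (powerset_alg prime_filters) (stone ` L)"
  unfolding bounded_sublattice_def powerset_alg_simps
proof (intro conjI ballI)
  show "stone ` L \<subseteq> Pow prime_filters" by (auto simp: stone_def)
  show "{} \<in> stone ` L" "prime_filters \<in> stone ` L"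
    using stone_bot stone_top bot_closed top_closed by (metis image_eqI)+
  fix a b assume "a \<in> stone ` L" "b \<in> stone ` L"
  then obtain u v where "u \<in> L" "v \<in> L" "a = stone u" "b = stone v" by blast
  then show "a \<inter> b \<in> stone ` L" "a \<union> b \<in> stone ` L"
    by (simp_all add: rev_image_eqI flip: stone_meet stone_join)
qed

abbreviation constructible_sets :: "'c set set set" where
  "constructible_sets \<equiv> P.cnf_forms (stone ` L)"

definition core :: "'c set set \<Rightarrow> 'c" where
  "core a = lub {w \<in> L. stone w \<subseteq> a}"

definition constructible_algebra :: "'c set set ialg" where
  "constructible_algebra =
     (powerset_alg prime_filters)
       \<lparr>ia_carrier := constructible_sets, ia_box := \<lambda>a. stone (core a)\<rparr>"

lemma core_closed: "core a \<in> L"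
  and le_core: "w \<in> L \<Longrightarrow> stone w \<subseteq> a \<Longrightarrow> le w (core a)"
  unfolding core_def by (auto intro: lub_closed lub_upper)

lemma core_stone: "x \<in> L \<Longrightarrow> core (stone x) = x"
  unfolding core_def
  by (rule lub_eqI) (auto simp: is_lub_def stone_subset_iff le_refl)

lemma stone_subset_cnf:
  assumes "w \<in> L" "set H \<subseteq> stone ` L \<times> stone ` L"
  shows "stone w \<subseteq> P.cnf H \<longleftrightarrow> (\<forall>(a, b)\<in>set H. stone w \<inter> a \<subseteq> b)"
  using assms(2)
proof (induction H rule: P.cnf.induct)
  case 1
  then show ?case by (auto simp: stone_def)
next
  case (2 a b H)
  then show ?case by (auto simp: stone_def)
qed

lemma stone_core_subset:
  assumes "a \<in> constructible_sets"
  shows "stone (core a) \<subseteq> a"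
proof -
  obtain H where H: "set H \<subseteq> stone ` L \<times> stone ` L" "a = P.cnf H"
    using assms by (rule P.cnf_formsE)
  have "stone (core a) \<inter> c \<subseteq> d" if cd: "(c, d) \<in> set H" for c d
  proof -
    obtain p q where pq: "p \<in> L" "q \<in> L" "c = stone p" "d = stone q" using cd H(1) by blast
    have "le (meet w p) q" if "w \<in> {w \<in> L. stone w \<subseteq> a}" for w
      using that pq H stone_subset_cnf[of w H] cd
      by (auto simp: stone_meet stone_subset_iff[symmetric])
    then have "le (meet (core a) p) q"
      unfolding core_def using pq by (intro meet_lub_le) auto
    then show ?thesis using pq core_closed by (simp add: stone_meet[symmetric] stone_subset_iff)
  qed
  then show ?thesis
    using stone_subset_cnf[OF core_closed H(1)] H(2) by auto
qed

lemma constructible_algebra_simps [simp]: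
  "ia_carrier constructible_algebra = constructible_sets"
  "ia_meet constructible_algebra = (\<inter>)"
  "ia_join constructible_algebra = (\<union>)"
  "ia_compl constructible_algebra = (\<lambda>a. prime_filters - a)"
  "ia_bot constructible_algebra = {}"
  "ia_top constructible_algebra = prime_filters"
  "ia_box constructible_algebra = (\<lambda>a. stone (core a))"
  by (simp_all add: constructible_algebra_def)

lemma ia_le_constructible_algebra: "ia_le constructible_algebra = (\<subseteq>)"
  by (auto simp: ia_le_def fun_eq_iff)

lemma stone_in_constructible_sets: "x \<in> L \<Longrightarrow> stone x \<in> constructible_sets"
  using P.sublattice_subset_cnf_forms[OF stone_sublattice] by blast

lemma constructible_sets_bool_closed: "bool_closed (powerset_alg prime_filters) constructible_sets"
  by (rule P.cnf_forms_bool_closed[OF stone_sublattice])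

lemma constructible_sets_Int:
  "a \<in> constructible_sets \<Longrightarrow> b \<in> constructible_sets \<Longrightarrow> a \<inter> b \<in> constructible_sets"
  using constructible_sets_bool_closed by (simp add: bool_closed_def)

lemma core_inter:
  assumes "a \<in> constructible_sets" "b \<in> constructible_sets"
  shows "core (a \<inter> b) = meet (core a) (core b)"
proof (rule le_antisym)
  have "stone (core (a \<inter> b)) \<subseteq> a" "stone (core (a \<inter> b)) \<subseteq> b"
    using stone_core_subset[OF constructible_sets_Int[OF assms]] by blast+
  then show "le (core (a \<inter> b)) (meet (core a) (core b))"
    by (simp add: le_meetI le_core core_closed)
  show "le (meet (core a) (core b)) (core (a \<inter> b))"
    using stone_core_subset[OF assms(1)] stone_core_subset[OF assms(2)]
    by (intro le_core) (auto simp: stone_meet core_closed)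
qed (simp_all add: core_closed)

lemma int_alg_constructible_algebra: "int_alg constructible_algebra"
proof (intro int_alg.intro bool_alg.intro int_alg_axioms.intro)
  show boolean: "boolean_alg constructible_algebra"
    unfolding constructible_algebra_def using P.cnf_forms_subset[OF stone_sublattice]
    by (intro boolean_alg_restrict boolean_alg_powerset_alg constructible_sets_bool_closed) simp
  show "interior_alg constructible_algebra"
    unfolding interior_alg_def ia_le_constructible_algebra
    using boolean core_stone[OF top_closed] core_closed stone_in_constructible_sets stone_core_subset
      core_stone[OF core_closed] constructible_sets_Int
    by (simp add: stone_top core_inter stone_meet)
qed

lemma opens_constructible_algebra: "opens constructible_algebra = stone ` L"
proof
  show "opens constructible_algebra \<subseteq> stone ` L"
    unfolding opens_def using core_closed by auto
  show "stone ` L \<subseteq> opens constructible_algebra"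
    unfolding opens_def using stone_in_constructible_sets core_stone by auto
qed

lemma constructible_alg_constructible_algebra: "constructible_alg constructible_algebra"
  unfolding constructible_alg_def essential_def
proof (intro conjI)
  show "interior_alg constructible_algebra"
    using int_alg_constructible_algebra by (simp add: int_alg_def int_alg_axioms_def)
  show "generated_subalg constructible_algebra (opens constructible_algebra) =
      ia_carrier constructible_algebra"
    unfolding opens_constructible_algebra
    using P.sublattice_subset_cnf_forms[OF stone_sublattice] constructible_sets_bool_closed
      P.cnf_forms_least[OF stone_sublattice]
    by (intro generated_subalg_eqI) (simp_all add: constructible_algebra_def)
  show "is_frame (opens constructible_algebra) (ia_le constructible_algebra)"
    unfolding opens_constructible_algebra ia_le_constructible_algebra
    using order_iso_stone frame by (rule order_iso_is_frame)
qed

lemma frame_iso_constructible_algebra: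
  "frame_iso (opens constructible_algebra) (ia_le constructible_algebra) L le"
  unfolding opens_constructible_algebra ia_le_constructible_algebra
  using order_iso_stone by (rule order_iso_frame_iso)

end

lemma frame_iso_opens_constructible_algebra:
  fixes L :: "'c set"
  assumes "is_frame L le"
  shows "\<exists>A :: 'c set set ialg. constructible_alg A \<and> frame_iso (opens A) (ia_le A) L le"
proof -
  interpret frame L le by (rule frame.intro) fact
  show ?thesis
    using constructible_alg_constructible_algebra frame_iso_constructible_algebra by blast
qed

theorem theorem4p6:
  shows
    \<comment> \<open>the open-element functor O : Cons \<rightarrow> Frm is well defined on objects and morphisms\<close>
    "(\<forall>(A :: 'a ialg). constructible_alg A \<longrightarrow> is_frame (opens A) (ia_le A))
   \<and> (\<forall>(A :: 'a ialg) (B :: 'b ialg) f. constructible_alg A \<longrightarrow> constructible_alg B \<longrightarrow>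
        constructible_hom A B f \<longrightarrow> frame_hom (opens A) (ia_le A) (opens B) (ia_le B) f)
   \<comment> \<open>faithful\<close>
   \<and> (\<forall>(A :: 'a ialg) (B :: 'b ialg) f g. constructible_alg A \<longrightarrow> constructible_alg B \<longrightarrow>
        constructible_hom A B f \<longrightarrow> constructible_hom A B g \<longrightarrow>
        (\<forall>a\<in>opens A. f a = g a) \<longrightarrow> (\<forall>a\<in>ia_carrier A. f a = g a))
   \<comment> \<open>full\<close>
   \<and> (\<forall>(A :: 'a ialg) (B :: 'b ialg) h. constructible_alg A \<longrightarrow> constructible_alg B \<longrightarrow>
        frame_hom (opens A) (ia_le A) (opens B) (ia_le B) h \<longrightarrow>
        (\<exists>f. constructible_hom A B f \<and> (\<forall>a\<in>opens A. f a = h a)))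
   \<comment> \<open>essentially surjective\<close>
   \<and> (\<forall>(L :: 'c set) le. is_frame L le \<longrightarrow>
        (\<exists>A :: 'c set set ialg. constructible_alg A \<and> frame_iso (opens A) (ia_le A) L le))"
proof (intro conjI allI impI ballI)
  fix A :: "'a ialg"
  assume "constructible_alg A"
  then show "is_frame (opens A) (ia_le A)" by (simp add: constructible_alg_def)
next
  fix A :: "'a ialg" and B :: "'b ialg" and f
  assume "constructible_hom A B f"
  then show "frame_hom (opens A) (ia_le A) (opens B) (ia_le B) f"
    by (simp add: constructible_hom_def)
next
  fix A :: "'a ialg" and B :: "'b ialg" and f g a
  assume "constructible_alg A" "constructible_alg B" "constructible_hom A B f"
    "constructible_hom A B g" "\<forall>a\<in>opens A. f a = g a" "a \<in> ia_carrier A"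
  then show "f a = g a" by (blast intro: constructible_hom_eq_on_opens)
next
  fix A :: "'a ialg" and B :: "'b ialg" and h
  assume "constructible_alg A" "constructible_alg B"
    "frame_hom (opens A) (ia_le A) (opens B) (ia_le B) h"
  then show "\<exists>f. constructible_hom A B f \<and> (\<forall>a\<in>opens A. f a = h a)"
    by (intro frame_hom_extends_to_constructible_hom constructible_alg_int_alg)
next
  fix L :: "'c set" and le
  assume "is_frame L le"
  then show "\<exists>A :: 'c set set ialg. constructible_alg A \<and> frame_iso (opens A) (ia_le A) L le"
    by (rule frame_iso_opens_constructible_algebra)
qed

end
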